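(* Let $\Sigma=(X,U,F)$ be a system, $Q\subset X$ a controlled invariant set with $\sharp Q<\infty$, and $V\subset U$ a finite cover of $Q$ such that: (C.1) $Q_a\cap Q_b=\emptyset$ for all distinct $a,b\in V$; (C.2) for all $a,b\in V$ with $M_{ab}=1$ there exists $K\subset Q_a$ such that $Q_b\subset F(K,a)$; (C.3) $Q_c=\emptyset$ for every $c\in U\setminus V$. Let $\mathcal{A}_V=\{Q_a:a\in V\}$ and $G_V(Q_a)=a$, and suppose $(\mathcal{C},G_{\mathcal{C}})$ is the atom refinement of $(\mathcal{A}_V,G_V)$. Then \[h^{fb}_{inv}(Q)=h_{inv}(\mathcal{C},G_{\mathcal{C}}).\]
   Context: A system is a triple $\Sigma=(X,U,F)$ where $X,U$ are nonempty sets and $F:X\times U\rightrightarrows X$ is a set-valued map with $F(x,u)\neq\emptyset$ for all $(x,u)$; for $A\subset X$, $F(A,u)=\bigcup_{x\in A}F(x,u)$. $Q\subset X$ is controlled invariant if for every $x\in Q$ there is $u\in U$ with $F(x,u)\subset Q$. For $u\in U$ put $Q_u=\{x\in Q:F(x,u)\subset Q\}$. A set $V\subset U$ is a cover of $Q$ if $Q\subset\bigcup_{a\in V}Q_a$; the admissible matrix $M_{Q,V}=(M_{ab})_{a,b\in V}$ has $M_{ab}=1$ if there exists $x\in Q_a$ with $F(x,a)\cap Q_b\neq\emptyset$, and $0$ otherwise. An invariant cover of $Q$ is a pair $(\mathcal{A},G)$ where $\mathcal{A}$ is a finite cover of $Q$ (by subsets of $Q$) and $G:\mathcal{A}\to U$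 satisfies $F(A,G(A))\subset Q$ for all $A\in\mathcal{A}$. For $\mathcal{S}\subset\mathcal{A}^n$, $\alpha=\alpha(0)\cdots\alpha(n-1)\in\mathcal{S}$ and integer $0\le t<n-1$, let $P(\alpha|_{[0,t]})=\{A\in\mathcal{A}:\exists\hat\alpha\in\mathcal{S},\ \hat\alpha|_{[0,t]}=\alpha|_{[0,t]},\ A=\hat\alpha(t+1)\}$, and $P(\alpha|_{[0,n-1]})=P(\alpha)=\{\hat\alpha(0):\hat\alpha\in\mathcal{S}\}$. $\mathcal{S}$ is $(n,Q)$-spanning in $(\mathcal{A},G)$ if (1) the elements of $P(\alpha)$ cover $Q$, and (2) for every $\alpha\in\mathcal{S}$ and $0\le t<n-1$, $F(\alpha(t),G(\alpha(t)))\subset\bigcup_{A'\in P(\alpha|_{[0,t]})}A'$. Let $N(\mathcal{S})=\max_{\alpha\in\mathcal{S}}\prod_{t=0}^{n-1}\sharp P(\alpha|_{[0,t]})$, $r_{inv}(n,Q,\mathcal{A},G)=\min\{N(\mathcal{S}):\mathcal{S}\ (n,Q)\text{-spanning in }(\mathcal{A},G)\}$, $h_{inv}(\mathcal{A},G)=\lim_{n\to\infty}\frac1n\log r_{inv}(n,Q,\mathcal{A},G)$ ($\log$ base $2$), and the invariance feedback entropy $h^{fb}_{inv}(Q)=\inf_{(\mathcal{A},G)}h_{inv}(\mathcal{A},G)$ over all invariant covers of $Q$. A refinement of $(\mathcal{A}_V,G_V)$ is a pair $(\mathcal{B},G_{\mathcal{B}})$ where $\mathcal{B}$ is a cover of $Q$,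 every $B\in\mathcal{B}$ is contained in some $A\in\mathcal{A}_V$, and $G_{\mathcal{B}}(B)=G_V(A)$. A refinement $(\mathcal{C},G_{\mathcal{C}})$ is the atom refinement of $(\mathcal{A}_V,G_V)$ if $\mathcal{C}=\{\{x\}:x\in Q\}$ (so $G_{\mathcal{C}}(\{x\})=a$ for the unique $a\in V$ with $x\in Q_a$) and $\sharp\big(F(x,a)\cap Q_b\big)\le1$ for all $a,b\in V$ and all $x\in Q_a$. *)

theory Defs
  imports Complex_Main
begin

text \<open>A system on state type 'x and input type 'u: F x u is the (nonempty) set of successors.\<close>

definition Fimg :: "('x \<Rightarrow> 'u \<Rightarrow> 'x set) \<Rightarrow> 'x set \<Rightarrow> 'u \<Rightarrow> 'x set" where
  "Fimg F A u = (\<Union>x\<in>A. F x u)"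

definition controlled_invariant :: "('x \<Rightarrow> 'u \<Rightarrow> 'x set) \<Rightarrow> 'x set \<Rightarrow> bool" where
  "controlled_invariant F Q \<longleftrightarrow> (\<forall>x\<in>Q. \<exists>u. F x u \<subseteq> Q)"

definition Qsub :: "('x \<Rightarrow> 'u \<Rightarrow> 'x set) \<Rightarrow> 'x set \<Rightarrow> 'u \<Rightarrow> 'x set" where
  "Qsub F Q u = {x\<in>Q. F x u \<subseteq> Q}"

definition is_cover :: "('x \<Rightarrow> 'u \<Rightarrow> 'x set) \<Rightarrow> 'x set \<Rightarrow> 'u set \<Rightarrow> bool" where
  "is_cover F Q V \<longleftrightarrow> Q \<subseteq> (\<Union>a\<in>V. Qsub F Q a)"

definition admissible :: "('x \<Rightarrow> 'u \<Rightarrow> 'x set) \<Rightarrow> 'x set \<Rightarrow> 'u \<Rightarrow> 'u \<Rightarrow> bool" where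
  "admissible F Q a b \<longleftrightarrow> (\<exists>x\<in>Qsub F Q a. F x a \<inter> Qsub F Q b \<noteq> {})"

definition invariant_cover ::
  "('x \<Rightarrow> 'u \<Rightarrow> 'x set) \<Rightarrow> 'x set \<Rightarrow> 'x set set \<Rightarrow> ('x set \<Rightarrow> 'u) \<Rightarrow> bool" where
  "invariant_cover F Q \<A> G \<longleftrightarrow>
     finite \<A> \<and> (\<forall>A\<in>\<A>. A \<subseteq> Q) \<and> Q \<subseteq> \<Union>\<A> \<and> (\<forall>A\<in>\<A>. Fimg F A (G A) \<subseteq> Q)"

text \<open>Sequences alpha = alpha(0)...alpha(n-1) in A^n are lists of length n.
  P S n alpha t is P(alpha|[0,t]); for t = n-1 it is the set of initial elements.\<close>

definition Pset :: "'a list set \<Rightarrow> nat \<Rightarrow> 'a list \<Rightarrow> nat \<Rightarrow> 'a set" where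
  "Pset S n \<alpha> t =
     (if Suc t < n
      then {\<beta> ! Suc t | \<beta>. \<beta> \<in> S \<and> take (Suc t) \<beta> = take (Suc t) \<alpha>}
      else (\<lambda>\<beta>. \<beta> ! 0) ` S)"

definition spanning ::
  "('x \<Rightarrow> 'u \<Rightarrow> 'x set) \<Rightarrow> 'x set \<Rightarrow> 'x set set \<Rightarrow> ('x set \<Rightarrow> 'u) \<Rightarrow> nat \<Rightarrow> 'x set list set \<Rightarrow> bool" where
  "spanning F Q \<A> G n S \<longleftrightarrow>
     S \<subseteq> {\<alpha>. length \<alpha> = n \<and> set \<alpha> \<subseteq> \<A>} \<and>
     Q \<subseteq> \<Union>((\<lambda>\<beta>. \<beta> ! 0) ` S) \<and>
     (\<forall>\<alpha>\<in>S. \<forall>t. Suc t < n \<longrightarrow> Fimg F (\<alpha> ! t) (G (\<alpha> ! t)) \<subseteq> \<Union>(Pset S n \<alpha> t))"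

definition Nspan :: "'a list set \<Rightarrow> nat \<Rightarrow> nat" where
  "Nspan S n = (if S = {} then 0 else Max ((\<lambda>\<alpha>. \<Prod>t<n. card (Pset S n \<alpha> t)) ` S))"

definition r_inv ::
  "('x \<Rightarrow> 'u \<Rightarrow> 'x set) \<Rightarrow> 'x set \<Rightarrow> nat \<Rightarrow> 'x set set \<Rightarrow> ('x set \<Rightarrow> 'u) \<Rightarrow> nat" where
  "r_inv F Q n \<A> G = Min {Nspan S n | S. spanning F Q \<A> G n S}"

definition h_inv ::
  "('x \<Rightarrow> 'u \<Rightarrow> 'x set) \<Rightarrow> 'x set \<Rightarrow> 'x set set \<Rightarrow> ('x set \<Rightarrow> 'u) \<Rightarrow> real" where
  "h_inv F Q \<A> G = lim (\<lambda>n. log 2 (real (r_inv F Q n \<A> G)) / real n)"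

definition h_fb_inv :: "('x \<Rightarrow> 'u \<Rightarrow> 'x set) \<Rightarrow> 'x set \<Rightarrow> real" where
  "h_fb_inv F Q = Inf {h_inv F Q \<A> G | \<A> G. invariant_cover F Q \<A> G}"

end

theory Submission
  imports Defs
begin

text \<open>Under (C.1) and (C.3) a state \<open>x \<in> Q\<close> lies in \<open>Q\<^sub>u\<close> only for \<open>u = G\<^sub>C {x}\<close>, so
  every invariant cover \<open>(\<A>, G)\<close> applies that input at \<open>x\<close>, and by the atom condition each
  element of \<open>\<A>\<close> contains at most one of the resulting successors of \<open>x\<close>. Following a
  closed-loop trajectory \<open>x\<^sub>0, \<dots>, x\<^sub>n\<close> through an \<open>(n + 1, Q)\<close>-spanning set therefore
  shows that \<open>r_inv (n + 1) \<A> G\<close> is at least the product \<open>\<Pi>\<close> of the numbers of successors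
  \<open>card (F x\<^sub>t (G\<^sub>C {x\<^sub>t}))\<close>, \<open>t < n\<close>. Conversely the closed-loop trajectories of atoms
  form a spanning set for the atom refinement, and for a maximising trajectory its size is at
  most \<open>\<Pi> \<cdot> card Q\<close>, the last factor counting the initial atoms. Hence the atom refinement
  needs at most \<open>card Q\<close> times as many sequences as any invariant cover, a factor that vanishes
  in the entropy. The limits defining the entropies exist by Fekete's lemma: concatenating
  spanning sets makes \<open>r_inv\<close> submultiplicative in \<open>n\<close>.\<close>

section \<open>Fekete's lemma\<close>

lemma subadditive_iterate:
  fixes u :: "nat \<Rightarrow> real"
  assumes sub: "\<And>n m. n \<ge> 1 \<Longrightarrow> m \<ge> 1 \<Longrightarrow> u (n + m) \<le> u n + u m"
    and m: "m \<ge> 1" and r: "r \<ge> 1"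
  shows "u (q * m + r) \<le> q * u m + u r"
proof (induction q)
  case 0
  then show ?case by simp
next
  case (Suc q)
  have "u (Suc q * m + r) = u (m + (q * m + r))" by (simp add: add.assoc)
  also have "\<dots> \<le> u m + u (q * m + r)" using sub[of m "q * m + r"] m r by simp
  also have "\<dots> \<le> u m + (q * u m + u r)" using Suc by simp
  finally show ?case by (simp add: algebra_simps)
qed

lemma subadditive_div_le:
  fixes u :: "nat \<Rightarrow> real"
  assumes nonneg: "\<And>n. n \<ge> 1 \<Longrightarrow> u n \<ge> 0"
    and sub: "\<And>n m. n \<ge> 1 \<Longrightarrow> m \<ge> 1 \<Longrightarrow> u (n + m) \<le> u n + u m"
    and m: "m \<ge> 1" and n: "n \<ge> 1"
  shows "u n / n \<le> u m / m + Max (u ` {1..m}) / n"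
proof -
  define q where "q = (n - 1) div m"
  define r where "r = (n - 1) mod m + 1"
  have "n - 1 = q * m + (n - 1) mod m" unfolding q_def by simp
  then have nqr: "n = q * m + r" unfolding r_def using n by linarith
  have r: "r \<in> {1..m}" unfolding r_def using m by (simp add: Suc_leI)
  have "u n \<le> q * u m + u r"
    using subadditive_iterate[of u, OF sub m, of r q] r unfolding nqr by simp
  also have "\<dots> \<le> q * u m + Max (u ` {1..m})" using r by simp
  also have "q * u m = real (q * m) * (u m / m)" using m by simp
  also have "\<dots> \<le> real n * (u m / m)"
    using nqr nonneg[OF m] by (intro mult_right_mono) auto
  finally show ?thesis using n by (simp add: field_simps)
qed

lemma subadditive_convergent:
  fixes u :: "nat \<Rightarrow> real"
  assumes nonneg: "\<And>n. n \<ge> 1 \<Longrightarrow> u n \<ge> 0"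
    and sub: "\<And>n m. n \<ge> 1 \<Longrightarrow> m \<ge> 1 \<Longrightarrow> u (n + m) \<le> u n + u m"
  shows "convergent (\<lambda>n. u n / n)"
proof -
  define X where "X = (\<lambda>n. u n / n) ` {1..}"
  define L where "L = Inf X"
  have bdd: "bdd_below X" unfolding X_def
    by (rule bdd_belowI[of _ 0]) (auto intro!: divide_nonneg_nonneg nonneg)
  have L_le: "L \<le> u n / n" if "n \<ge> 1" for n
    unfolding L_def using that by (intro cInf_lower[OF _ bdd]) (auto simp: X_def)
  have "(\<lambda>n. u n / n) \<longlonglongrightarrow> L"
  proof (rule LIMSEQ_I)
    fix e :: real
    assume e: "0 < e"
    have "X \<noteq> {}" unfolding X_def by auto
    then obtain y where "y \<in> X" "y < L + e / 2"
      using cInf_lessD[of X "L + e / 2"] e unfolding L_def by auto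
    then obtain m where m: "m \<ge> 1" "u m / m < L + e / 2" unfolding X_def by auto
    define M where "M = Max (u ` {1..m})"
    obtain N :: nat where N: "real N > 2 * M / e" using reals_Archimedean2 by blast
    have "norm (u n / n - L) < e" if n: "n \<ge> N + 1" for n
    proof -
      have "2 * M < e * real N" using N e by (simp add: field_simps)
      also have "\<dots> \<le> e * real n" using n e by (intro mult_left_mono) auto
      finally have "M / n < e / 2" using n e by (simp add: field_simps)
      then have "u n / n < L + e"
        using subadditive_div_le[of u, OF nonneg sub m(1), of n] m(2) n unfolding M_def by linarith
      with L_le[of n] n show ?thesis by simp
    qed
    then show "\<exists>N. \<forall>n\<ge>N. norm (u n / n - L) < e" by blast
  qed
  then show ?thesis by (rule convergentI)
qed

section \<open>Spanning sets\<close>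

lemma Pset_less:
  "Suc t < n \<Longrightarrow> Pset S n \<alpha> t = {\<beta> ! Suc t | \<beta>. \<beta> \<in> S \<and> take (Suc t) \<beta> = take (Suc t) \<alpha>}"
  by (simp add: Pset_def)

lemma Pset_less_iff:
  "Suc t < n \<Longrightarrow> A \<in> Pset S n \<alpha> t \<longleftrightarrow> (\<exists>\<beta>\<in>S. take (Suc t) \<beta> = take (Suc t) \<alpha> \<and> A = \<beta> ! Suc t)"
  by (auto simp: Pset_def)

lemma Pset_last: "\<not> Suc t < n \<Longrightarrow> Pset S n \<alpha> t = (\<lambda>\<beta>. \<beta> ! 0) ` S"
  by (simp add: Pset_def)

lemma Pset_nonempty: "\<alpha> \<in> S \<Longrightarrow> Pset S n \<alpha> t \<noteq> {}"
  by (cases "Suc t < n") (auto simp: Pset_less Pset_last)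

lemma spanning_memD: "spanning F Q \<A> G n S \<Longrightarrow> \<alpha> \<in> S \<Longrightarrow> length \<alpha> = n \<and> set \<alpha> \<subseteq> \<A>"
  unfolding spanning_def by auto

lemma spanning_covers: "spanning F Q \<A> G n S \<Longrightarrow> Q \<subseteq> \<Union> ((\<lambda>\<beta>. \<beta> ! 0) ` S)"
  unfolding spanning_def by auto

lemma spanning_successors:
  "spanning F Q \<A> G n S \<Longrightarrow> \<alpha> \<in> S \<Longrightarrow> Suc t < n \<Longrightarrow>
     Fimg F (\<alpha> ! t) (G (\<alpha> ! t)) \<subseteq> \<Union> (Pset S n \<alpha> t)"
  unfolding spanning_def by auto

lemma spanning_nonempty: "spanning F Q \<A> G n S \<Longrightarrow> Q \<noteq> {} \<Longrightarrow> S \<noteq> {}"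
  unfolding spanning_def by auto

lemma spanning_nth_mem: "spanning F Q \<A> G n S \<Longrightarrow> \<alpha> \<in> S \<Longrightarrow> t < n \<Longrightarrow> \<alpha> ! t \<in> \<A>"
  using spanning_memD by (metis nth_mem subsetD)

lemma Pset_subset: "spanning F Q \<A> G n S \<Longrightarrow> t < n \<Longrightarrow> Pset S n \<alpha> t \<subseteq> \<A>"
  by (cases "Suc t < n") (auto simp: Pset_less Pset_last intro: spanning_nth_mem)

lemma finite_spanning: "finite \<A> \<Longrightarrow> spanning F Q \<A> G n S \<Longrightarrow> finite S"
  by (rule finite_subset[OF _ finite_lists_length_eq[of \<A> n]]) (auto dest: spanning_memD)

lemma card_Pset_ge_1:
  "finite \<A> \<Longrightarrow> spanning F Q \<A> G n S \<Longrightarrow> \<alpha> \<in> S \<Longrightarrow> t < n \<Longrightarrow> 1 \<le> card (Pset S n \<alpha> t)"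
  by (metis One_nat_def Pset_nonempty Pset_subset Suc_leI card_gt_0_iff finite_subset)

lemma prod_card_Pset_le_Nspan:
  "finite S \<Longrightarrow> \<alpha> \<in> S \<Longrightarrow> (\<Prod>t<n. card (Pset S n \<alpha> t)) \<le> Nspan S n"
  unfolding Nspan_def by (auto intro!: Max_ge)

lemma Nspan_le:
  "finite S \<Longrightarrow> (\<And>\<alpha>. \<alpha> \<in> S \<Longrightarrow> (\<Prod>t<n. card (Pset S n \<alpha> t)) \<le> c) \<Longrightarrow> Nspan S n \<le> c"
  unfolding Nspan_def by (auto intro!: Max.boundedI)

lemma Nspan_attained:
  assumes "finite S" "S \<noteq> {}"
  obtains \<alpha> where "\<alpha> \<in> S" "Nspan S n = (\<Prod>t<n. card (Pset S n \<alpha> t))"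
proof -
  have "Max ((\<lambda>\<alpha>. \<Prod>t<n. card (Pset S n \<alpha> t)) ` S) \<in> (\<lambda>\<alpha>. \<Prod>t<n. card (Pset S n \<alpha> t)) ` S"
    using assms by (intro Max_in) auto
  then obtain \<alpha> where
    "\<alpha> \<in> S" "Max ((\<lambda>\<alpha>. \<Prod>t<n. card (Pset S n \<alpha> t)) ` S) = (\<Prod>t<n. card (Pset S n \<alpha> t))"
    by auto
  then show ?thesis using that assms(2) unfolding Nspan_def by simp
qed

lemma finite_Nspans: "finite \<A> \<Longrightarrow> finite {Nspan S n | S. spanning F Q \<A> G n S}"
proof -
  assume fin: "finite \<A>"
  have "{S. spanning F Q \<A> G n S} \<subseteq> Pow {\<alpha>. set \<alpha> \<subseteq> \<A> \<and> length \<alpha> = n}"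
    by (auto dest: spanning_memD)
  then have "finite {S. spanning F Q \<A> G n S}"
    using finite_lists_length_eq[OF fin] by (meson finite_Pow_iff finite_subset)
  moreover have
    "{Nspan S n | S. spanning F Q \<A> G n S} = (\<lambda>S. Nspan S n) ` {S. spanning F Q \<A> G n S}"
    by auto
  ultimately show ?thesis by simp
qed

lemma r_inv_le_Nspan: "finite \<A> \<Longrightarrow> spanning F Q \<A> G n S \<Longrightarrow> r_inv F Q n \<A> G \<le> Nspan S n"
  unfolding r_inv_def by (rule Min_le[OF finite_Nspans]) auto

lemma invariant_cover_subset_Qsub: "invariant_cover F Q \<A> G \<Longrightarrow> A \<in> \<A> \<Longrightarrow> A \<subseteq> Qsub F Q (G A)"
  unfolding invariant_cover_def Qsub_def Fimg_def by blast

lemma spanning_lists: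
  assumes ic: "invariant_cover F Q \<A> G" and n: "0 < n"
  shows "spanning F Q \<A> G n {\<alpha>. length \<alpha> = n \<and> set \<alpha> \<subseteq> \<A>}" (is "spanning _ _ _ _ _ ?L")
  unfolding spanning_def
proof (intro conjI ballI allI impI)
  show "Q \<subseteq> \<Union> ((\<lambda>\<beta>. \<beta> ! 0) ` ?L)"
  proof
    fix x
    assume "x \<in> Q"
    then obtain A where A: "A \<in> \<A>" "x \<in> A" using ic unfolding invariant_cover_def by blast
    then have "replicate n A \<in> ?L" "replicate n A ! 0 = A" using n by auto
    then show "x \<in> \<Union> ((\<lambda>\<beta>. \<beta> ! 0) ` ?L)" using A by force
  qed
  fix \<alpha> t
  assume \<alpha>: "\<alpha> \<in> ?L" and t: "Suc t < n"
  have "\<Union>\<A> \<subseteq> \<Union> (Pset ?L n \<alpha> t)"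
  proof
    fix y
    assume "y \<in> \<Union>\<A>"
    then obtain A where A: "A \<in> \<A>" "y \<in> A" by blast
    define \<beta> where "\<beta> = take (Suc t) \<alpha> @ replicate (n - Suc t) A"
    have "\<beta> \<in> ?L" "take (Suc t) \<beta> = take (Suc t) \<alpha>" "\<beta> ! Suc t = A"
      unfolding \<beta>_def using \<alpha> t A by (auto dest: in_set_takeD simp: nth_append)
    then have "A \<in> Pset ?L n \<alpha> t" unfolding Pset_less[OF t] by blast
    then show "y \<in> \<Union> (Pset ?L n \<alpha> t)" using A by blast
  qed
  moreover have "\<alpha> ! t \<in> \<A>" using \<alpha> t by auto
  ultimately show "Fimg F (\<alpha> ! t) (G (\<alpha> ! t)) \<subseteq> \<Union> (Pset ?L n \<alpha> t)"
    using ic unfolding invariant_cover_def by blast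
qed simp

lemma r_inv_attained:
  assumes "invariant_cover F Q \<A> G" "0 < n"
  obtains S where "spanning F Q \<A> G n S" "r_inv F Q n \<A> G = Nspan S n"
proof -
  have fin: "finite {Nspan S n | S. spanning F Q \<A> G n S}"
    using assms(1) finite_Nspans unfolding invariant_cover_def by blast
  have "Min {Nspan S n | S. spanning F Q \<A> G n S} \<in> {Nspan S n | S. spanning F Q \<A> G n S}"
    using spanning_lists[OF assms] by (intro Min_in[OF fin]) auto
  then show ?thesis using that unfolding r_inv_def by auto
qed

lemma r_inv_ge_1:
  assumes ic: "invariant_cover F Q \<A> G" and n: "0 < n" and Q: "Q \<noteq> {}"
  shows "1 \<le> r_inv F Q n \<A> G"
proof -
  have fin: "finite \<A>" using ic unfolding invariant_cover_def by simp
  obtain S where S: "spanning F Q \<A> G n S" "r_inv F Q n \<A> G = Nspan S n"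
    using r_inv_attained[OF ic n] .
  obtain \<alpha> where \<alpha>: "\<alpha> \<in> S" using spanning_nonempty[OF S(1) Q] by blast
  have "1 \<le> (\<Prod>t<n. card (Pset S n \<alpha> t))"
    using card_Pset_ge_1[OF fin S(1) \<alpha>] by (intro prod_ge_1) auto
  also have "\<dots> \<le> r_inv F Q n \<A> G"
    using prod_card_Pset_le_Nspan[OF finite_spanning[OF fin S(1)] \<alpha>] S(2) by simp
  finally show ?thesis .
qed

section \<open>Concatenation of spanning sets and existence of the entropy\<close>

lemma prod_lessThan_add:
  fixes f :: "nat \<Rightarrow> 'a::comm_monoid_mult"
  shows "(\<Prod>t<n + m. f t) = (\<Prod>t<n. f t) * (\<Prod>s<m. f (n + s))"
  by (induction m) (simp_all add: mult.assoc)

definition append_sets :: "'a list set \<Rightarrow> 'a list set \<Rightarrow> 'a list set" where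
  "append_sets S T = {\<alpha> @ \<beta> | \<alpha> \<beta>. \<alpha> \<in> S \<and> \<beta> \<in> T}"

lemma finite_append_sets: "finite S \<Longrightarrow> finite T \<Longrightarrow> finite (append_sets S T)"
proof -
  assume "finite S" "finite T"
  moreover have "append_sets S T = (\<lambda>(\<alpha>, \<beta>). \<alpha> @ \<beta>) ` (S \<times> T)"
    unfolding append_sets_def by auto
  ultimately show ?thesis by simp
qed

context
  fixes S :: "'a list set" and n :: nat
  assumes length_S: "\<forall>\<alpha>\<in>S. length \<alpha> = n"
begin

lemma firsts_append_sets:
  assumes n: "0 < n" and T: "T \<noteq> {}"
  shows "(\<lambda>\<gamma>. \<gamma> ! 0) ` append_sets S T = (\<lambda>\<alpha>. \<alpha> ! 0) ` S"
proof
  show "(\<lambda>\<gamma>. \<gamma> ! 0) ` append_sets S T \<subseteq> (\<lambda>\<alpha>. \<alpha> ! 0) ` S"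
    using n length_S by (auto simp: append_sets_def nth_append)
  obtain \<beta> where \<beta>: "\<beta> \<in> T" using T by blast
  show "(\<lambda>\<alpha>. \<alpha> ! 0) ` S \<subseteq> (\<lambda>\<gamma>. \<gamma> ! 0) ` append_sets S T"
  proof
    fix A
    assume "A \<in> (\<lambda>\<alpha>. \<alpha> ! 0) ` S"
    then obtain \<alpha> where "\<alpha> \<in> S" "A = \<alpha> ! 0" by blast
    then have "\<alpha> @ \<beta> \<in> append_sets S T" "A = (\<alpha> @ \<beta>) ! 0"
      using \<beta> n length_S unfolding append_sets_def by (auto simp: nth_append)
    then show "A \<in> (\<lambda>\<gamma>. \<gamma> ! 0) ` append_sets S T" by blast
  qed
qed

lemma Pset_append_sets_head:
  assumes \<alpha>: "\<alpha> \<in> S" and t: "Suc t < n" and T: "T \<noteq> {}"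
  shows "Pset (append_sets S T) (n + m) (\<alpha> @ \<beta>) t = Pset S n \<alpha> t"
proof (intro equalityI subsetI)
  have t': "Suc t < n + m" using t by simp
  have prefix: "take (Suc t) (\<alpha>' @ \<beta>') = take (Suc t) \<alpha>'" "(\<alpha>' @ \<beta>') ! Suc t = \<alpha>' ! Suc t"
    if "\<alpha>' \<in> S" for \<alpha>' \<beta>'
    using length_S[rule_format, OF that] t by (simp_all add: nth_append)
  fix A
  {
    assume "A \<in> Pset (append_sets S T) (n + m) (\<alpha> @ \<beta>) t"
    then obtain \<alpha>' \<beta>' where "\<alpha>' \<in> S" "A = (\<alpha>' @ \<beta>') ! Suc t"
      "take (Suc t) (\<alpha>' @ \<beta>') = take (Suc t) (\<alpha> @ \<beta>)"
      unfolding Pset_less_iff[OF t'] append_sets_def by blast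
    then show "A \<in> Pset S n \<alpha> t"
      unfolding Pset_less_iff[OF t] using prefix[OF \<alpha>] prefix by metis
  next
    assume "A \<in> Pset S n \<alpha> t"
    then obtain \<alpha>' where \<alpha>': "\<alpha>' \<in> S" "A = \<alpha>' ! Suc t" "take (Suc t) \<alpha>' = take (Suc t) \<alpha>"
      unfolding Pset_less_iff[OF t] by blast
    obtain \<beta>' where "\<beta>' \<in> T" using T by blast
    then have "\<alpha>' @ \<beta>' \<in> append_sets S T" using \<alpha>' unfolding append_sets_def by blast
    then show "A \<in> Pset (append_sets S T) (n + m) (\<alpha> @ \<beta>) t"
      unfolding Pset_less_iff[OF t'] using \<alpha>' prefix[OF \<alpha>] prefix[OF \<alpha>'(1)] by metis
  }
qed

lemma Pset_append_sets_junction: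
  assumes \<alpha>: "\<alpha> \<in> S" and n: "0 < n" and m: "0 < m"
  shows "Pset (append_sets S T) (n + m) (\<alpha> @ \<beta>) (n - 1) = (\<lambda>\<beta>. \<beta> ! 0) ` T"
proof (intro equalityI subsetI)
  obtain k where k: "n = Suc k" using n not0_implies_Suc by blast
  have k': "Suc k < n + m" using k m by simp
  have split: "take (Suc k) (\<alpha>' @ \<beta>') = \<alpha>'" "(\<alpha>' @ \<beta>') ! Suc k = \<beta>' ! 0" if "\<alpha>' \<in> S" for \<alpha>' \<beta>'
    using length_S[rule_format, OF that] k by (simp_all add: nth_append)
  fix A
  {
    assume "A \<in> Pset (append_sets S T) (n + m) (\<alpha> @ \<beta>) (n - 1)"
    then obtain \<alpha>' \<beta>' where "\<alpha>' \<in> S" "\<beta>' \<in> T" "A = (\<alpha>' @ \<beta>') ! Suc k"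
      unfolding k diff_Suc_1 Pset_less_iff[OF k'[unfolded k]] append_sets_def by blast
    then show "A \<in> (\<lambda>\<beta>. \<beta> ! 0) ` T" using split by auto
  next
    assume "A \<in> (\<lambda>\<beta>. \<beta> ! 0) ` T"
    then obtain \<beta>' where \<beta>': "\<beta>' \<in> T" "A = \<beta>' ! 0" by blast
    then have "\<alpha> @ \<beta>' \<in> append_sets S T" using \<alpha> unfolding append_sets_def by blast
    then show "A \<in> Pset (append_sets S T) (n + m) (\<alpha> @ \<beta>) (n - 1)"
      unfolding k diff_Suc_1 Pset_less_iff[OF k'[unfolded k]] using \<alpha> \<beta>' split by metis
  }
qed

lemma Pset_append_sets_tail:
  assumes \<alpha>: "\<alpha> \<in> S" and s: "Suc s < m"
  shows "Pset (append_sets S T) (n + m) (\<alpha> @ \<beta>) (n + s) = Pset T m \<beta> s"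
proof (intro equalityI subsetI)
  have s': "Suc (n + s) < n + m" using s by simp
  have split: "take (Suc (n + s)) (\<alpha>' @ \<beta>') = \<alpha>' @ take (Suc s) \<beta>'"
    "(\<alpha>' @ \<beta>') ! Suc (n + s) = \<beta>' ! Suc s" if "\<alpha>' \<in> S" for \<alpha>' \<beta>'
    using length_S[rule_format, OF that] by (simp_all add: nth_append)
  fix A
  {
    assume "A \<in> Pset (append_sets S T) (n + m) (\<alpha> @ \<beta>) (n + s)"
    then obtain \<alpha>' \<beta>' where \<alpha>': "\<alpha>' \<in> S" and \<beta>': "\<beta>' \<in> T" and "A = (\<alpha>' @ \<beta>') ! Suc (n + s)"
      and "take (Suc (n + s)) (\<alpha>' @ \<beta>') = take (Suc (n + s)) (\<alpha> @ \<beta>)"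
      unfolding Pset_less_iff[OF s'] append_sets_def by blast
    then have "A = \<beta>' ! Suc s" "take (Suc s) \<beta>' = take (Suc s) \<beta>"
      using split[OF \<alpha>'] split[OF \<alpha>] length_S[rule_format, OF \<alpha>'] length_S[rule_format, OF \<alpha>]
      by simp_all
    then show "A \<in> Pset T m \<beta> s" unfolding Pset_less_iff[OF s] using \<beta>' by blast
  next
    assume "A \<in> Pset T m \<beta> s"
    then obtain \<beta>' where \<beta>': "\<beta>' \<in> T" "A = \<beta>' ! Suc s" "take (Suc s) \<beta>' = take (Suc s) \<beta>"
      unfolding Pset_less_iff[OF s] by blast
    then have "\<alpha> @ \<beta>' \<in> append_sets S T" using \<alpha> unfolding append_sets_def by blast
    then show "A \<in> Pset (append_sets S T) (n + m) (\<alpha> @ \<beta>) (n + s)"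
      unfolding Pset_less_iff[OF s'] using \<beta>' split[OF \<alpha>] by metis
  }
qed

lemma Pset_append_sets_last:
  assumes "0 < n" "T \<noteq> {}"
  shows "Pset (append_sets S T) (n + m) \<gamma> (n + m - 1) = (\<lambda>\<alpha>. \<alpha> ! 0) ` S"
  using firsts_append_sets[OF assms] by (simp add: Pset_last)

lemma prod_card_Pset_append_sets:
  assumes \<alpha>: "\<alpha> \<in> S" and T: "T \<noteq> {}" and n: "0 < n" and m: "0 < m"
  shows "(\<Prod>t<n + m. card (Pset (append_sets S T) (n + m) (\<alpha> @ \<beta>) t)) =
    (\<Prod>t<n. card (Pset S n \<alpha> t)) * (\<Prod>s<m. card (Pset T m \<beta> s))"
proof -
  define f where "f t = card (Pset (append_sets S T) (n + m) (\<alpha> @ \<beta>) t)" for t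
  obtain n' m' where n': "n = Suc n'" and m': "m = Suc m'" using n m not0_implies_Suc by blast
  have "(\<Prod>t<n'. f t) = (\<Prod>t<n'. card (Pset S n \<alpha> t))"
  proof (rule prod.cong)
    fix t
    assume "t \<in> {..<n'}"
    then have "Suc t < n" using n' by simp
    then show "f t = card (Pset S n \<alpha> t)"
      unfolding f_def by (simp add: Pset_append_sets_head[OF \<alpha> _ T])
  qed simp
  moreover have "(\<Prod>s<m'. f (n + s)) = (\<Prod>s<m'. card (Pset T m \<beta> s))"
  proof (rule prod.cong)
    fix s
    assume "s \<in> {..<m'}"
    then have "Suc s < m" using m' by simp
    then show "f (n + s) = card (Pset T m \<beta> s)"
      unfolding f_def by (simp add: Pset_append_sets_tail[OF \<alpha>])
  qed simp
  \<comment> \<open>The factors at \<open>n - 1\<close> and \<open>n + m - 1\<close> are the sets of initial elements of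
    \<open>T\<close> and of \<open>S\<close>: they trade places.\<close>
  moreover have "f n' = card (Pset T m \<beta> m')"
    unfolding f_def using Pset_append_sets_junction[OF \<alpha> n m] n' m' by (simp add: Pset_last)
  moreover have "f (n + m') = card (Pset S n \<alpha> n')"
    unfolding f_def using Pset_append_sets_last[OF n T] n' m' by (simp add: Pset_last)
  moreover have "(\<Prod>t<n + m. f t) = ((\<Prod>t<n'. f t) * f n') * ((\<Prod>s<m'. f (n + s)) * f (n + m'))"
    unfolding prod_lessThan_add n' m' by simp
  ultimately show ?thesis unfolding f_def n' m' by (simp add: ac_simps)
qed

end

lemma spanning_append_sets:
  assumes ic: "invariant_cover F Q \<A> G" and Q: "Q \<noteq> {}" and n: "0 < n" and m: "0 < m"
    and S: "spanning F Q \<A> G n S" and T: "spanning F Q \<A> G m T"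
  shows "spanning F Q \<A> G (n + m) (append_sets S T)"
  unfolding spanning_def
proof (intro conjI ballI allI impI)
  have len: "\<forall>\<alpha>\<in>S. length \<alpha> = n" using spanning_memD[OF S] by blast
  have T_ne: "T \<noteq> {}" using spanning_nonempty[OF T Q] .
  show "append_sets S T \<subseteq> {\<gamma>. length \<gamma> = n + m \<and> set \<gamma> \<subseteq> \<A>}"
    using spanning_memD[OF S] spanning_memD[OF T] unfolding append_sets_def by fastforce
  show "Q \<subseteq> \<Union> ((\<lambda>\<gamma>. \<gamma> ! 0) ` append_sets S T)"
    using spanning_covers[OF S] firsts_append_sets[OF len n T_ne] by simp
  fix \<gamma> t
  assume "\<gamma> \<in> append_sets S T" and t: "Suc t < n + m"
  then obtain \<alpha> \<beta> where \<alpha>: "\<alpha> \<in> S" and \<beta>: "\<beta> \<in> T" and \<gamma>: "\<gamma> = \<alpha> @ \<beta>"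
    unfolding append_sets_def by blast
  consider "Suc t < n" | "t = n - 1" | s where "t = n + s" "Suc s < m"
    using t by (metis add_Suc_right add_diff_inverse_nat diff_Suc_1 less_Suc_eq
        nat_add_left_cancel_less not_less_eq)
  then show "Fimg F (\<gamma> ! t) (G (\<gamma> ! t)) \<subseteq> \<Union> (Pset (append_sets S T) (n + m) \<gamma> t)"
  proof cases
    case 1
    then show ?thesis
      using spanning_successors[OF S \<alpha> 1] len[rule_format, OF \<alpha>]
      unfolding \<gamma> Pset_append_sets_head[OF len \<alpha> 1 T_ne] by (simp add: nth_append)
  next
    case 2
    have "\<gamma> ! t \<in> \<A>" using spanning_nth_mem[OF S \<alpha>, of t] len[rule_format, OF \<alpha>] n 2
      unfolding \<gamma> by (simp add: nth_append)
    then have "Fimg F (\<gamma> ! t) (G (\<gamma> ! t)) \<subseteq> Q" using ic unfolding invariant_cover_def by blast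
    also have "Q \<subseteq> \<Union> ((\<lambda>\<beta>. \<beta> ! 0) ` T)" by (rule spanning_covers[OF T])
    finally show ?thesis unfolding \<gamma> 2 Pset_append_sets_junction[OF len \<alpha> n m] .
  next
    case 3
    then show ?thesis
      using spanning_successors[OF T \<beta> 3(2)] len[rule_format, OF \<alpha>]
      unfolding \<gamma> 3(1) Pset_append_sets_tail[OF len \<alpha> 3(2)] by (simp add: nth_append)
  qed
qed

lemma r_inv_add_le:
  assumes ic: "invariant_cover F Q \<A> G" and Q: "Q \<noteq> {}" and n: "0 < n" and m: "0 < m"
  shows "r_inv F Q (n + m) \<A> G \<le> r_inv F Q n \<A> G * r_inv F Q m \<A> G"
proof -
  have fin: "finite \<A>" using ic unfolding invariant_cover_def by simp
  obtain S where S: "spanning F Q \<A> G n S" "r_inv F Q n \<A> G = Nspan S n"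
    using r_inv_attained[OF ic n] .
  obtain T where T: "spanning F Q \<A> G m T" "r_inv F Q m \<A> G = Nspan T m"
    using r_inv_attained[OF ic m] .
  have len: "\<forall>\<alpha>\<in>S. length \<alpha> = n" using spanning_memD[OF S(1)] by blast
  have finS: "finite S" and finT: "finite T"
    using finite_spanning[OF fin S(1)] finite_spanning[OF fin T(1)] .
  have "r_inv F Q (n + m) \<A> G \<le> Nspan (append_sets S T) (n + m)"
    by (rule r_inv_le_Nspan[OF fin spanning_append_sets[OF ic Q n m S(1) T(1)]])
  also have "\<dots> \<le> Nspan S n * Nspan T m"
  proof (rule Nspan_le[OF finite_append_sets[OF finS finT]])
    fix \<gamma>
    assume "\<gamma> \<in> append_sets S T"
    then obtain \<alpha> \<beta> where \<alpha>: "\<alpha> \<in> S" and \<beta>: "\<beta> \<in> T" and \<gamma>: "\<gamma> = \<alpha> @ \<beta>"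
      unfolding append_sets_def by blast
    have "(\<Prod>t<n + m. card (Pset (append_sets S T) (n + m) \<gamma> t)) =
        (\<Prod>t<n. card (Pset S n \<alpha> t)) * (\<Prod>s<m. card (Pset T m \<beta> s))"
      unfolding \<gamma> by (rule prod_card_Pset_append_sets[OF len \<alpha> spanning_nonempty[OF T(1) Q] n m])
    also have "\<dots> \<le> Nspan S n * Nspan T m"
      by (intro mult_le_mono prod_card_Pset_le_Nspan finS finT \<alpha> \<beta>)
    finally show "(\<Prod>t<n + m. card (Pset (append_sets S T) (n + m) \<gamma> t)) \<le> Nspan S n * Nspan T m" .
  qed
  finally show ?thesis using S(2) T(2) by simp
qed

lemma h_inv_LIMSEQ:
  assumes ic: "invariant_cover F Q \<A> G" and Q: "Q \<noteq> {}"
  shows "(\<lambda>n. log 2 (real (r_inv F Q n \<A> G)) / real n) \<longlonglongrightarrow> h_inv F Q \<A> G"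
proof -
  define u where "u n = log 2 (real (r_inv F Q n \<A> G))" for n
  have pos: "1 \<le> real (r_inv F Q n \<A> G)" if "n \<ge> 1" for n
    using r_inv_ge_1[OF ic _ Q, of n] that by simp
  have "convergent (\<lambda>n. u n / n)"
  proof (rule subadditive_convergent)
    fix n :: nat
    assume "n \<ge> 1"
    then show "0 \<le> u n" unfolding u_def using pos[of n] by simp
  next
    fix n m :: nat
    assume nm: "n \<ge> 1" "m \<ge> 1"
    have "real (r_inv F Q (n + m) \<A> G) \<le> real (r_inv F Q n \<A> G) * real (r_inv F Q m \<A> G)"
      using r_inv_add_le[OF ic Q, of n m] nm by (simp flip: of_nat_mult)
    then have "u (n + m) \<le> log 2 (real (r_inv F Q n \<A> G) * real (r_inv F Q m \<A> G))"
      unfolding u_def using pos[of "n + m"] nm by (subst log_le_cancel_iff) auto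
    also have "\<dots> = u n + u m" unfolding u_def using pos[of n] pos[of m] nm
      by (subst log_mult_pos) auto
    finally show "u (n + m) \<le> u n + u m" .
  qed
  then show ?thesis unfolding h_inv_def u_def by (simp add: convergent_LIMSEQ_iff)
qed

lemma r_inv_empty:
  assumes "finite \<A>" "Q = {}"
  shows "r_inv F Q n \<A> G = 0"
proof -
  have "spanning F Q \<A> G n {}" unfolding spanning_def using assms(2) by simp
  then show ?thesis using r_inv_le_Nspan[OF assms(1)] by (fastforce simp: Nspan_def)
qed

lemma h_inv_empty:
  assumes ic: "invariant_cover F Q \<A> G" and Q: "Q = {}"
  shows "h_inv F Q \<A> G = 0"
proof -
  have "finite \<A>" using ic unfolding invariant_cover_def by simp
  then have "r_inv F Q n \<A> G = 0" for n using r_inv_empty[OF _ Q] by blast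
  then have "(\<lambda>n. log 2 (real (r_inv F Q n \<A> G)) / real n) = (\<lambda>n. 0)"
    by (simp add: log_def)
  then show ?thesis unfolding h_inv_def by (simp add: limI)
qed

lemma h_inv_le_of_r_inv_le:
  assumes ic\<^sub>1: "invariant_cover F Q \<A> G" and ic\<^sub>2: "invariant_cover F Q \<B> H"
    and le: "\<And>n. 0 < n \<Longrightarrow> r_inv F Q n \<A> G \<le> c * r_inv F Q n \<B> H"
  shows "h_inv F Q \<A> G \<le> h_inv F Q \<B> H"
proof (cases "Q = {}")
  case True
  then show ?thesis using h_inv_empty[OF ic\<^sub>1] h_inv_empty[OF ic\<^sub>2] by simp
next
  case False
  have r\<^sub>1: "1 \<le> real (r_inv F Q n \<A> G)" and r\<^sub>2: "1 \<le> real (r_inv F Q n \<B> H)" if "0 < n" for n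
    using r_inv_ge_1[OF ic\<^sub>1 that False] r_inv_ge_1[OF ic\<^sub>2 that False] by simp_all
  have c: "1 \<le> real c"
    using le[of 1] r_inv_ge_1[OF ic\<^sub>1 _ False, of 1] by (cases c) auto
  have bound: "log 2 (real (r_inv F Q n \<A> G)) / n
      \<le> log 2 c / n + log 2 (real (r_inv F Q n \<B> H)) / n" if n: "n \<ge> 1" for n
  proof -
    have "real (r_inv F Q n \<A> G) \<le> real c * real (r_inv F Q n \<B> H)"
      using le[of n] n by (simp flip: of_nat_mult)
    then have "log 2 (real (r_inv F Q n \<A> G)) \<le> log 2 (real c * real (r_inv F Q n \<B> H))"
      using r\<^sub>1[of n] n by (subst log_le_cancel_iff) auto
    also have "\<dots> = log 2 c + log 2 (real (r_inv F Q n \<B> H))"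
      using c r\<^sub>2[of n] n by (subst log_mult_pos) auto
    finally show ?thesis using n by (simp add: divide_right_mono flip: add_divide_distrib)
  qed
  have "(\<lambda>n. log 2 c / n + log 2 (real (r_inv F Q n \<B> H)) / n) \<longlonglongrightarrow> 0 + h_inv F Q \<B> H"
    by (intro tendsto_add lim_const_over_n h_inv_LIMSEQ[OF ic\<^sub>2 False])
  with h_inv_LIMSEQ[OF ic\<^sub>1 False] have "h_inv F Q \<A> G \<le> 0 + h_inv F Q \<B> H"
    by (rule LIMSEQ_le) (use bound in auto)
  then show ?thesis by simp
qed

section \<open>The atom refinement\<close>

text \<open>Hypotheses (C.1), (C.3) and the atom refinement.\<close>

locale atom_refinement =
  fixes F :: "'x \<Rightarrow> 'u \<Rightarrow> 'x set" and Q :: "'x set" and V :: "'u set" and GC :: "'x set \<Rightarrow> 'u"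
  assumes finite_Q: "finite Q"
    and F_nonempty: "\<And>x u. F x u \<noteq> {}"
    and Qsub_disjoint: "\<And>a b. a \<in> V \<Longrightarrow> b \<in> V \<Longrightarrow> a \<noteq> b \<Longrightarrow> Qsub F Q a \<inter> Qsub F Q b = {}"
    and Qsub_outside: "\<And>c. c \<notin> V \<Longrightarrow> Qsub F Q c = {}"
    and GC_atom: "\<And>x. x \<in> Q \<Longrightarrow> GC {x} \<in> V \<and> x \<in> Qsub F Q (GC {x})"
    and card_F_inter_Qsub:
      "\<And>a b x. a \<in> V \<Longrightarrow> b \<in> V \<Longrightarrow> x \<in> Qsub F Q a \<Longrightarrow> card (F x a \<inter> Qsub F Q b) \<le> 1"
begin

abbreviation succs :: "'x \<Rightarrow> 'x set" where
  "succs x \<equiv> F x (GC {x})"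

abbreviation atoms :: "'x set set" where
  "atoms \<equiv> {{x} | x. x \<in> Q}"

lemma Qsub_unique: "x \<in> Qsub F Q u \<Longrightarrow> u = GC {x}"
proof -
  assume x: "x \<in> Qsub F Q u"
  then have "u \<in> V" using Qsub_outside by blast
  moreover have "x \<in> Q" using x unfolding Qsub_def by blast
  ultimately show ?thesis using x GC_atom Qsub_disjoint by blast
qed

lemma invariant_cover_input: "invariant_cover F Q \<A> G \<Longrightarrow> A \<in> \<A> \<Longrightarrow> x \<in> A \<Longrightarrow> G A = GC {x}"
  using invariant_cover_subset_Qsub Qsub_unique by blast

lemma succs_subset: "x \<in> Q \<Longrightarrow> succs x \<subseteq> Q"
  using GC_atom unfolding Qsub_def by blast

lemma finite_succs: "x \<in> Q \<Longrightarrow> finite (succs x)"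
  using succs_subset finite_Q finite_subset by blast

lemma invariant_cover_atoms: "invariant_cover F Q atoms GC"
proof -
  have "atoms = (\<lambda>x. {x}) ` Q" by auto
  then have "finite atoms" using finite_Q by simp
  then show ?thesis using succs_subset unfolding invariant_cover_def Fimg_def by auto
qed

lemma card_succs_inter_Qsub: "x \<in> Q \<Longrightarrow> card (succs x \<inter> Qsub F Q b) \<le> 1"
  by (cases "b \<in> V") (use GC_atom card_F_inter_Qsub Qsub_outside in auto)

text \<open>An element \<open>B\<close> of an invariant cover lies in \<open>Q\<^bsub>G B\<^esub>\<close>, which contains at most
  one successor of \<open>x\<close>.\<close>

lemma card_succs_le_card_cover:
  assumes ic: "invariant_cover F Q \<A> G" and x: "x \<in> Q"
    and P: "finite P" "P \<subseteq> \<A>" and cover: "succs x \<subseteq> \<Union>P"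
  shows "card (succs x) \<le> card P"
proof -
  have "card (succs x) = card (\<Union>B\<in>P. succs x \<inter> B)"
    using cover by (metis Int_Union inf.absorb1)
  also have "\<dots> \<le> (\<Sum>B\<in>P. card (succs x \<inter> B))" by (rule card_UN_le[OF P(1)])
  also have "\<dots> \<le> (\<Sum>B\<in>P. 1)"
  proof (rule sum_mono)
    fix B
    assume "B \<in> P"
    then have "succs x \<inter> B \<subseteq> succs x \<inter> Qsub F Q (G B)"
      using invariant_cover_subset_Qsub[OF ic] P(2) by blast
    then have "card (succs x \<inter> B) \<le> card (succs x \<inter> Qsub F Q (G B))"
      using finite_succs[OF x] by (intro card_mono) auto
    also have "\<dots> \<le> 1" by (rule card_succs_inter_Qsub[OF x])
    finally show "card (succs x \<inter> B) \<le> 1" .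
  qed
  finally show ?thesis by simp
qed

definition trajectory :: "nat \<Rightarrow> (nat \<Rightarrow> 'x) \<Rightarrow> bool" where
  "trajectory n x \<longleftrightarrow> (\<forall>i<n. x i \<in> Q) \<and> (\<forall>i. Suc i < n \<longrightarrow> x (Suc i) \<in> succs (x i))"

definition step :: "'x \<Rightarrow> 'x" where
  "step x = (SOME y. y \<in> succs x)"

lemma step_in_succs: "step x \<in> succs x"
  unfolding step_def using F_nonempty by (simp add: some_in_eq)

lemma trajectory_iterate_step: "y \<in> Q \<Longrightarrow> trajectory n (\<lambda>i. (step ^^ i) y)"
proof -
  assume y: "y \<in> Q"
  have "(step ^^ i) y \<in> Q" for i
    by (induction i) (use y succs_subset step_in_succs in auto)
  then show ?thesis unfolding trajectory_def using step_in_succs by simp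
qed

lemma trajectory_extend:
  assumes x: "trajectory n x" and t: "Suc t < n" and y: "y \<in> succs (x t)"
  shows "trajectory n (\<lambda>i. if i \<le> t then x i else (step ^^ (i - Suc t)) y)"
proof -
  define z where "z = (\<lambda>i. if i \<le> t then x i else (step ^^ (i - Suc t)) y)"
  have "x t \<in> Q" using x t unfolding trajectory_def by simp
  then have "y \<in> Q" using y succs_subset by blast
  then have tail: "trajectory n (\<lambda>i. (step ^^ i) y)" by (rule trajectory_iterate_step)
  have "z i \<in> Q" if "i < n" for i
    using x tail that unfolding z_def trajectory_def by auto
  moreover have "z (Suc i) \<in> succs (z i)" if "Suc i < n" for i
  proof (cases "Suc i \<le> t")
    case True
    then show ?thesis using x that unfolding z_def trajectory_def by simp
  next
    case False
    then have "i = t \<or> Suc i - Suc t = Suc (i - Suc t)" by auto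
    then show ?thesis using y step_in_succs False unfolding z_def by auto
  qed
  ultimately show ?thesis unfolding trajectory_def z_def by blast
qed

definition trajectory_lists :: "nat \<Rightarrow> 'x set list set" where
  "trajectory_lists n = {map (\<lambda>i. {x i}) [0..<n] | x. trajectory n x}"

lemma spanning_trajectory_lists:
  assumes n: "0 < n"
  shows "spanning F Q atoms GC n (trajectory_lists n)"
  unfolding spanning_def
proof (intro conjI ballI allI impI)
  show "trajectory_lists n \<subseteq> {\<alpha>. length \<alpha> = n \<and> set \<alpha> \<subseteq> atoms}"
    unfolding trajectory_lists_def trajectory_def by auto
  show "Q \<subseteq> \<Union> ((\<lambda>\<beta>. \<beta> ! 0) ` trajectory_lists n)"
  proof
    fix y
    assume "y \<in> Q"
    then have "map (\<lambda>i. {(step ^^ i) y}) [0..<n] \<in> trajectory_lists n"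
      unfolding trajectory_lists_def
      by (auto intro!: exI[of _ "\<lambda>i. (step ^^ i) y"] trajectory_iterate_step)
    moreover have "map (\<lambda>i. {(step ^^ i) y}) [0..<n] ! 0 = {y}" using n by simp
    ultimately show "y \<in> \<Union> ((\<lambda>\<beta>. \<beta> ! 0) ` trajectory_lists n)"
      by (metis UnionI image_eqI singletonI)
  qed
  fix \<alpha> t
  assume "\<alpha> \<in> trajectory_lists n" and t: "Suc t < n"
  then obtain x where x: "trajectory n x" and \<alpha>: "\<alpha> = map (\<lambda>i. {x i}) [0..<n]"
    unfolding trajectory_lists_def by blast
  show "Fimg F (\<alpha> ! t) (GC (\<alpha> ! t)) \<subseteq> \<Union> (Pset (trajectory_lists n) n \<alpha> t)"
  proof
    fix y
    assume "y \<in> Fimg F (\<alpha> ! t) (GC (\<alpha> ! t))"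
    then have y: "y \<in> succs (x t)" using t unfolding \<alpha> Fimg_def by simp
    define x' where "x' = (\<lambda>i. if i \<le> t then x i else (step ^^ (i - Suc t)) y)"
    have "map (\<lambda>i. {x' i}) [0..<n] \<in> trajectory_lists n"
      unfolding trajectory_lists_def using trajectory_extend[OF x t y]
      by (auto intro!: exI[of _ x'] simp: x'_def)
    moreover have "take (Suc t) (map (\<lambda>i. {x' i}) [0..<n]) = take (Suc t) \<alpha>"
      unfolding \<alpha> using t by (auto simp: x'_def take_map intro!: map_cong)
    moreover have "map (\<lambda>i. {x' i}) [0..<n] ! Suc t = {y}" using t by (simp add: x'_def)
    ultimately have "{y} \<in> Pset (trajectory_lists n) n \<alpha> t" unfolding Pset_less_iff[OF t] by metis
    then show "y \<in> \<Union> (Pset (trajectory_lists n) n \<alpha> t)" by blast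
  qed
qed

lemma card_Pset_trajectory_lists:
  assumes x: "trajectory n x" and t: "Suc t < n"
  shows "card (Pset (trajectory_lists n) n (map (\<lambda>i. {x i}) [0..<n]) t) \<le> card (succs (x t))"
proof -
  let ?P = "Pset (trajectory_lists n) n (map (\<lambda>i. {x i}) [0..<n]) t"
  have xt: "x t \<in> Q" using x t unfolding trajectory_def by simp
  have "?P \<subseteq> (\<lambda>y. {y}) ` succs (x t)"
  proof
    fix B
    assume "B \<in> ?P"
    then obtain x' where x': "trajectory n x'" and B: "B = {x' (Suc t)}"
      and "take (Suc t) (map (\<lambda>i. {x' i}) [0..<n]) = take (Suc t) (map (\<lambda>i. {x i}) [0..<n])"
      unfolding Pset_less_iff[OF t] trajectory_lists_def using t by auto
    then have "take (Suc t) (map (\<lambda>i. {x' i}) [0..<n]) ! t =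
        take (Suc t) (map (\<lambda>i. {x i}) [0..<n]) ! t"
      by simp
    then have "x' t = x t" using t by simp
    then show "B \<in> (\<lambda>y. {y}) ` succs (x t)" using x' t B unfolding trajectory_def by auto
  qed
  then have "card ?P \<le> card ((\<lambda>y. {y}) ` succs (x t))"
    using finite_succs[OF xt] by (intro card_mono) auto
  also have "\<dots> \<le> card (succs (x t))" by (rule card_image_le[OF finite_succs[OF xt]])
  finally show ?thesis .
qed

lemma r_inv_atoms_le:
  assumes Q: "Q \<noteq> {}"
  obtains x where "trajectory (Suc n) x"
    and "r_inv F Q (Suc n) atoms GC \<le> (\<Prod>t<n. card (succs (x t))) * card Q"
proof -
  let ?S = "trajectory_lists (Suc n)"
  have span: "spanning F Q atoms GC (Suc n) ?S" by (rule spanning_trajectory_lists) simp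
  have fin: "finite atoms" using invariant_cover_atoms unfolding invariant_cover_def by blast
  obtain \<alpha> where "\<alpha> \<in> ?S" and N: "Nspan ?S (Suc n) = (\<Prod>t<Suc n. card (Pset ?S (Suc n) \<alpha> t))"
    using Nspan_attained[OF finite_spanning[OF fin span] spanning_nonempty[OF span Q]] by blast
  then obtain x where x: "trajectory (Suc n) x" and \<alpha>: "\<alpha> = map (\<lambda>i. {x i}) [0..<Suc n]"
    unfolding trajectory_lists_def by blast
  have "card (Pset ?S (Suc n) \<alpha> n) \<le> card atoms"
    using Pset_subset[OF span, of n] fin by (intro card_mono) auto
  also have "card atoms \<le> card Q"
    using finite_Q by (metis Setcompr_eq_image card_image_le)
  finally have last: "card (Pset ?S (Suc n) \<alpha> n) \<le> card Q" .
  have "r_inv F Q (Suc n) atoms GC \<le> Nspan ?S (Suc n)" by (rule r_inv_le_Nspan[OF fin span])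
  also have "\<dots> = (\<Prod>t<n. card (Pset ?S (Suc n) \<alpha> t)) * card (Pset ?S (Suc n) \<alpha> n)"
    unfolding N by simp
  also have "\<dots> \<le> (\<Prod>t<n. card (succs (x t))) * card Q"
    using card_Pset_trajectory_lists[OF x] last unfolding \<alpha> by (intro mult_le_mono prod_mono) auto
  finally show ?thesis using that x by blast
qed

lemma spanning_follows_trajectory:
  assumes ic: "invariant_cover F Q \<A> G" and S: "spanning F Q \<A> G n S"
    and x: "trajectory n x" and k: "k < n"
  shows "\<exists>\<beta>\<in>S. \<forall>i\<le>k. x i \<in> \<beta> ! i"
  using k
proof (induction k)
  case 0
  then have "x 0 \<in> Q" using x unfolding trajectory_def by simp
  then show ?case using spanning_covers[OF S] by auto
next
  case (Suc k)
  then obtain \<beta> where \<beta>: "\<beta> \<in> S" and follows: "\<forall>i\<le>k. x i \<in> \<beta> ! i" by auto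
  have "\<beta> ! k \<in> \<A>" using spanning_nth_mem[OF S \<beta>] Suc.prems by simp
  then have "G (\<beta> ! k) = GC {x k}" using invariant_cover_input[OF ic] follows by blast
  then have "x (Suc k) \<in> Fimg F (\<beta> ! k) (G (\<beta> ! k))"
    using x Suc.prems follows unfolding trajectory_def Fimg_def by auto
  then obtain B where "B \<in> Pset S n \<beta> k" "x (Suc k) \<in> B"
    using spanning_successors[OF S \<beta> Suc.prems] by blast
  then obtain \<gamma> where \<gamma>: "\<gamma> \<in> S" "take (Suc k) \<gamma> = take (Suc k) \<beta>" "x (Suc k) \<in> \<gamma> ! Suc k"
    using Pset_less_iff[OF Suc.prems] by metis
  have "\<gamma> ! i = \<beta> ! i" if "i \<le> k" for i
    using that nth_take[of i "Suc k"] \<gamma>(2) by (metis le_imp_less_Suc)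
  then have "\<forall>i\<le>Suc k. x i \<in> \<gamma> ! i" using follows \<gamma>(3) by (auto simp: le_Suc_eq)
  then show ?case using \<gamma>(1) by blast
qed

lemma prod_card_succs_le_r_inv:
  assumes ic: "invariant_cover F Q \<A> G" and x: "trajectory (Suc n) x"
  shows "(\<Prod>t<n. card (succs (x t))) \<le> r_inv F Q (Suc n) \<A> G"
proof -
  have fin: "finite \<A>" using ic unfolding invariant_cover_def by simp
  obtain S where S: "spanning F Q \<A> G (Suc n) S" "r_inv F Q (Suc n) \<A> G = Nspan S (Suc n)"
    using r_inv_attained[OF ic] by blast
  obtain \<beta> where \<beta>: "\<beta> \<in> S" and follows: "\<forall>i\<le>n. x i \<in> \<beta> ! i"
    using spanning_follows_trajectory[OF ic S(1) x, of n] by auto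
  have "card (succs (x t)) \<le> card (Pset S (Suc n) \<beta> t)" if t: "t < n" for t
  proof (rule card_succs_le_card_cover[OF ic])
    show "x t \<in> Q" using x t unfolding trajectory_def by simp
    show "Pset S (Suc n) \<beta> t \<subseteq> \<A>" using Pset_subset[OF S(1)] t by simp
    then show "finite (Pset S (Suc n) \<beta> t)" using fin by (rule finite_subset)
    have "\<beta> ! t \<in> \<A>" using spanning_nth_mem[OF S(1) \<beta>] t by simp
    moreover have xt: "x t \<in> \<beta> ! t" using follows t by simp
    ultimately have "G (\<beta> ! t) = GC {x t}" by (rule invariant_cover_input[OF ic])
    then have "succs (x t) \<subseteq> Fimg F (\<beta> ! t) (G (\<beta> ! t))"
      using xt unfolding Fimg_def by auto
    also have "\<dots> \<subseteq> \<Union> (Pset S (Suc n) \<beta> t)" using spanning_successors[OF S(1) \<beta>] t by simp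
    finally show "succs (x t) \<subseteq> \<Union> (Pset S (Suc n) \<beta> t)" .
  qed
  then have "(\<Prod>t<n. card (succs (x t))) \<le> (\<Prod>t<n. card (Pset S (Suc n) \<beta> t))"
    by (intro prod_mono) auto
  also have "\<dots> \<le> (\<Prod>t<Suc n. card (Pset S (Suc n) \<beta> t))"
    using card_Pset_ge_1[OF fin S(1) \<beta>, of n] by simp
  also have "\<dots> \<le> r_inv F Q (Suc n) \<A> G"
    using prod_card_Pset_le_Nspan[OF finite_spanning[OF fin S(1)] \<beta>, where n = "Suc n"] S(2) by simp
  finally show ?thesis .
qed

lemma r_inv_atoms_le_card_mult:
  assumes ic: "invariant_cover F Q \<A> G" and n: "0 < n"
  shows "r_inv F Q n atoms GC \<le> card Q * r_inv F Q n \<A> G"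
proof (cases "Q = {}")
  case True
  have "finite atoms" using invariant_cover_atoms unfolding invariant_cover_def by blast
  then have "r_inv F Q n atoms GC = 0" using True by (rule r_inv_empty)
  then show ?thesis by simp
next
  case False
  obtain m where m: "n = Suc m" using n not0_implies_Suc by blast
  obtain x where x: "trajectory (Suc m) x"
    and le: "r_inv F Q (Suc m) atoms GC \<le> (\<Prod>t<m. card (succs (x t))) * card Q"
    using r_inv_atoms_le[OF False] by blast
  have "r_inv F Q n atoms GC \<le> (\<Prod>t<m. card (succs (x t))) * card Q" using le m by simp
  also have "\<dots> \<le> r_inv F Q n \<A> G * card Q"
    using prod_card_succs_le_r_inv[OF ic x] m by (intro mult_le_mono1) simp
  finally show ?thesis by (simp add: mult.commute)
qed

end

theorem theorem3p13:
  fixes F :: "'x \<Rightarrow> 'u \<Rightarrow> 'x set" and Q :: "'x set" and V :: "'u set"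
    and GC :: "'x set \<Rightarrow> 'u"
  assumes nonempty: "\<forall>x u. F x u \<noteq> {}"
    and ci: "controlled_invariant F Q"
    and finQ: "finite Q"
    and finV: "finite V"
    and cov: "is_cover F Q V"
    and C1: "\<forall>a\<in>V. \<forall>b\<in>V. a \<noteq> b \<longrightarrow> Qsub F Q a \<inter> Qsub F Q b = {}"
    and C2: "\<forall>a\<in>V. \<forall>b\<in>V. admissible F Q a b \<longrightarrow>
               (\<exists>K. K \<subseteq> Qsub F Q a \<and> Qsub F Q b \<subseteq> Fimg F K a)"
    and C3: "\<forall>c. c \<notin> V \<longrightarrow> Qsub F Q c = {}"
    and GC: "\<forall>x\<in>Q. GC {x} \<in> V \<and> x \<in> Qsub F Q (GC {x})"
    and atom: "\<forall>a\<in>V. \<forall>b\<in>V. \<forall>x\<in>Qsub F Q a. card (F x a \<inter> Qsub F Q b) \<le> 1"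
  shows "h_fb_inv F Q = h_inv F Q {{x} | x. x \<in> Q} GC"
proof -
  interpret atom_refinement F Q V GC
    using nonempty finQ C1 C3 GC atom by unfold_locales simp_all
  have minimal: "h_inv F Q atoms GC \<le> h_inv F Q \<A> G" if ic: "invariant_cover F Q \<A> G" for \<A> G
    using h_inv_le_of_r_inv_le[OF invariant_cover_atoms ic r_inv_atoms_le_card_mult[OF ic]] .
  show ?thesis
    unfolding h_fb_inv_def
  proof (rule cInf_eq_minimum)
    show "h_inv F Q atoms GC \<in> {h_inv F Q \<A> G | \<A> G. invariant_cover F Q \<A> G}"
      using invariant_cover_atoms by blast
  qed (use minimal in blast)
qed

end
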